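(* Let $\beta\in\mathbb{F}_{p^m}\setminus\{0\}$ and $\mathcal{R}_{\alpha,\beta}=R[x]/\langle x^{4p^s}-(\alpha+\beta u)\rangle$. Let $P(x)=ax^3+bx^2+cx+d\in\mathbb{F}_{p^m}[x]$ be a nonzero polynomial. Then $P(x)$ is a unit in $\mathcal{R}_{\alpha,\beta}$ if and only if $$P(x)\notin \left\langle x^2+\gamma x+\tfrac{\gamma^2}{2}\right\rangle\cup\left\langle x^2-\gamma x+\tfrac{\gamma^2}{2}\right\rangle$$ (ideals of $\mathcal{R}_{\alpha,\beta}$). As a consequence, $\langle x^4-\alpha_0\rangle\subsetneq\langle x^2+\gamma x+\frac{\gamma^2}{2}\rangle$ and $\langle x^4-\alpha_0\rangle\subsetneq\langle x^2-\gamma x+\frac{\gamma^2}{2}\rangle$ in $\mathcal{R}_{\alpha,\beta}$.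
   Context: Let $p$ be an odd prime and $m,s$ positive integers with $p^m\equiv 3\pmod 4$; $\mathbb{F}_{p^m}$ is the field with $p^m$ elements and $R=\mathbb{F}_{p^m}[u]/\langle u^2\rangle$. Fix $\alpha\in\mathbb{F}_{p^m}\setminus\{0\}$ that is not a square in $\mathbb{F}_{p^m}$, let $\alpha_0\in\mathbb{F}_{p^m}$ satisfy $\alpha_0^{p^s}=\alpha$, and let $\gamma\in\mathbb{F}_{p^m}$ satisfy $\gamma^4+4\alpha_0=0$. *)

theory Defs
  imports "HOL-Computational_Algebra.Polynomial" "HOL-Library.Cardinality"
begin

text \<open>The ring R = F[u]/<u^2>: the element Dual a b stands for a + b u.\<close>
datatype 'a dual = Dual 'a 'a

fun dfst :: "'a dual \<Rightarrow> 'a" where "dfst (Dual a b) = a"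
fun dsnd :: "'a dual \<Rightarrow> 'a" where "dsnd (Dual a b) = b"

lemma dual_eq_iff: "x = y \<longleftrightarrow> dfst x = dfst y \<and> dsnd x = dsnd y"
  by (cases x; cases y) auto

instantiation dual :: (comm_ring_1) comm_ring_1
begin
definition "0 = Dual 0 0"
definition "1 = Dual 1 0"
definition "x + y = Dual (dfst x + dfst y) (dsnd x + dsnd y)"
definition "x - y = Dual (dfst x - dfst y) (dsnd x - dsnd y)"
definition "- x = Dual (- dfst x) (- dsnd x)"
definition "x * y = Dual (dfst x * dfst y) (dfst x * dsnd y + dsnd x * dfst y)"
instance
  by standard (auto simp: dual_eq_iff zero_dual_def one_dual_def plus_dual_def
      minus_dual_def uminus_dual_def times_dual_def algebra_simps)
end

definition lift_poly :: "'a::comm_ring_1 poly \<Rightarrow> 'a dual poly" where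
  "lift_poly f = map_poly (\<lambda>c. Dual c 0) f"

definition rmod :: "nat \<Rightarrow> 'a::comm_ring_1 \<Rightarrow> 'a \<Rightarrow> 'a dual poly" where
  "rmod N \<alpha> \<beta> = monom 1 N - [:Dual \<alpha> \<beta>:]"

definition quot_unit :: "'a::comm_ring_1 poly \<Rightarrow> 'a poly \<Rightarrow> bool" where
  "quot_unit M P \<longleftrightarrow> (\<exists>Q. M dvd (P * Q - 1))"

text \<open>The principal ideal <g> of R[x]/<M>, represented by its full preimage in R[x].\<close>
definition quot_ideal :: "'a::comm_ring_1 poly \<Rightarrow> 'a poly \<Rightarrow> 'a poly set" where
  "quot_ideal M g = {P. \<exists>Q. M dvd (P - Q * g)}"

end

theory Submission
  imports Defs "HOL-Computational_Algebra.Computational_Algebra" "HOL-Number_Theory.Residues"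
begin

hide_const (open) UnivPoly.coeff UnivPoly.monom

text \<open>
  Write \<open>f = x^4 - \<alpha>\<^sub>0\<close> and \<open>k = p^s\<close>. Since \<open>\<gamma>^4 = -4\<alpha>\<^sub>0\<close>, \<open>f\<close> is the product of the two
  quadratics in the statement, and \<open>f\<close> has no root, since a root \<open>r\<close> would make
  \<open>\<alpha> = (r^(2k))^2\<close> a square; so both quadratics are irreducible. By the Frobenius identity
  \<open>f^k = x^(4k) - \<alpha>\<close> the modulus is \<open>M = f^k - \<beta>u\<close>: it reduces modulo \<open>u\<close> to \<open>f^k\<close> and, as
  \<open>u^2 = 0\<close>, divides \<open>f^(2k)\<close>. Hence a polynomial over the field is a unit modulo \<open>M\<close> exactly
  when it is coprime to \<open>f\<close> (a Bezout identity \<open>AP + Bf = 1\<close> is inverted by a geometric series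
  in \<open>Bf\<close>), and its membership in the ideal generated by a divisor of \<open>f\<close> can be read off
  modulo \<open>u\<close>.
\<close>

section \<open>Coprimality of polynomials over a field\<close>

lemma coprime_iff_bezout:
  fixes a b :: "'a::euclidean_ring"
  shows "coprime a b \<longleftrightarrow> (\<exists>x y. x * a + y * b = 1)"
proof
  show "coprime a b \<Longrightarrow> \<exists>x y. x * a + y * b = 1"
  proof (induction "euclidean_size b" arbitrary: a b rule: less_induct)
    case less
    show ?case
    proof (cases "b = 0")
      case True
      with less.prems obtain e where "1 = a * e"
        by (auto elim: dvdE)
      then show ?thesis
        by (metis mult.commute mult_zero_left add_0_right)
    next
      case False
      with less.prems have "coprime b (a mod b)"
        by (simp add: coprime_commute)
      then obtain x y where "x * b + y * (a mod b) = 1"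
        using less.hyps False mod_size_less by blast
      moreover have "y * a + (x - y * (a div b)) * b = x * b + y * (a mod b)"
        by (simp add: algebra_simps flip: minus_div_mult_eq_mod)
      ultimately have "y * a + (x - y * (a div b)) * b = 1"
        by simp
      then show ?thesis
        by blast
    qed
  qed
  show "\<exists>x y. x * a + y * b = 1 \<Longrightarrow> coprime a b"
    by (auto intro!: coprimeI) (metis dvd_add dvd_mult)
qed

lemma euclidean_coprime_mult_right_iff:
  fixes a b c :: "'a::euclidean_ring"
  shows "coprime a (b * c) \<longleftrightarrow> coprime a b \<and> coprime a c"
proof
  show "coprime a (b * c) \<Longrightarrow> coprime a b \<and> coprime a c"
    by (auto intro!: coprimeI dest: coprime_common_divisor)
next
  assume "coprime a b \<and> coprime a c"
  then obtain x1 y1 x2 y2 where b: "x1 * a + y1 * b = 1" and c: "x2 * a + y2 * c = 1"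
    unfolding coprime_iff_bezout by blast
  have "(x1 * x2 * a + x1 * y2 * c + y1 * b * x2) * a + (y1 * y2) * (b * c)
      = (x1 * a + y1 * b) * (x2 * a + y2 * c)"
    by (simp add: algebra_simps)
  then have "(x1 * x2 * a + x1 * y2 * c + y1 * b * x2) * a + (y1 * y2) * (b * c) = 1"
    by (simp add: b c)
  then show "coprime a (b * c)"
    unfolding coprime_iff_bezout by blast
qed

lemma poly_degree_1_has_root:
  fixes p :: "'a::field poly"
  assumes "degree p = 1"
  obtains r where "poly p r = 0"
proof -
  obtain a b where "p = [:b, a:]" "a \<noteq> 0"
    using degree1_coeffs[OF assms] .
  then have "poly p (- b / a) = 0"
    by simp
  then show thesis ..
qed

text \<open>A rootless polynomial of degree at most three has no factor of degree one, so every
  factorization has a constant factor.\<close>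
lemma coprime_iff_not_dvd_if_no_root:
  fixes g P :: "'a::field poly"
  assumes "0 < degree g" "degree g \<le> 3" "\<And>r. poly g r \<noteq> 0"
  shows "coprime P g \<longleftrightarrow> \<not> g dvd P"
proof
  assume "coprime P g"
  then show "\<not> g dvd P"
    using assms(1) coprime_common_divisor[of P g g] is_unit_iff_degree[of g] by fastforce
next
  assume not_dvd: "\<not> g dvd P"
  show "coprime P g"
  proof (rule coprimeI)
    fix h
    assume "h dvd P" "h dvd g"
    then obtain c where g: "g = h * c"
      by (auto elim: dvdE)
    have "g \<noteq> 0"
      using assms(1) by auto
    then have nonzero: "h \<noteq> 0" "c \<noteq> 0"
      using g by auto
    have "degree h \<noteq> 1" "degree c \<noteq> 1"
      using assms(3) poly_degree_1_has_root g by (metis mult_eq_0_iff poly_mult)+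
    moreover have "degree g = degree h + degree c"
      using g nonzero by (simp add: degree_mult_eq)
    ultimately consider "degree h = 0" | "degree c = 0"
      using assms(2) by linarith
    then show "is_unit h"
    proof cases
      case 1
      then show ?thesis
        using is_unit_iff_degree nonzero(1) by blast
    next
      case 2
      then have "g dvd h"
        using g nonzero(2) is_unit_iff_degree by (metis dvd_mult_unit_iff dvd_refl)
      with \<open>h dvd P\<close> not_dvd show ?thesis
        using dvd_trans by blast
    qed
  qed
qed

section \<open>The quartic \<open>x\<^sup>4 - c\<close>\<close>

lemma poly_x4_minus_const_nonzero:
  fixes c :: "'a::field"
  assumes "\<nexists>y. y ^ 2 = c ^ k"
  shows "poly [:- c, 0, 0, 0, 1:] r \<noteq> 0"
proof
  assume "poly [:- c, 0, 0, 0, 1:] r = 0"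
  then have "r ^ 4 = c"
    by (simp add: algebra_simps power4_eq_xxxx)
  then have "(r ^ (2 * k)) ^ 2 = c ^ k"
    by (metis power_mult mult.commute mult_2 numeral_Bit0)
  with assms show False
    by blast
qed

lemma CHAR_eq_if_card_eq_prime_power:
  assumes "prime p" "CARD('a::{field,finite}) = p ^ m"
  shows "CHAR('a) = p"
proof -
  have "prime CHAR('a)"
    by (rule prime_CHAR_semidom) (simp add: finite_imp_CHAR_pos)
  moreover have "CHAR('a) dvd p ^ m"
    using CHAR_dvd_CARD[where 'a='a] assms(2) by simp
  ultimately show ?thesis
    using assms(1) prime_dvd_power primes_dvd_imp_eq by blast
qed

lemma monom_minus_const_power_CHAR:
  fixes c :: "'a::comm_ring_1"
  assumes "prime CHAR('a)" "odd CHAR('a)"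
  shows "(monom 1 n - [:c:]) ^ (CHAR('a) ^ s) = monom 1 (n * CHAR('a) ^ s) - [:c ^ CHAR('a) ^ s:]"
proof -
  have "(monom 1 n - [:c:]) ^ (CHAR('a) ^ s) = monom 1 n ^ (CHAR('a) ^ s) + (- [:c:]) ^ (CHAR('a) ^ s)"
    unfolding diff_conv_add_uminus by (rule freshmans_dream') (use assms(1) in simp_all)
  also have "(- [:c:]) ^ (CHAR('a) ^ s) = - [:c ^ CHAR('a) ^ s:]"
    using assms(2) by (simp add: poly_const_pow)
  finally show ?thesis
    by (simp add: monom_power)
qed

text \<open>Sophie Germain's identity \<open>x\<^sup>4 + 4b\<^sup>4 = (x\<^sup>2 + 2bx + 2b\<^sup>2)(x\<^sup>2 - 2bx + 2b\<^sup>2)\<close>, with \<open>\<gamma> = 2b\<close>.\<close>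
lemma x4_minus_const_factorization:
  fixes \<gamma> c :: "'a::field"
  assumes "(2::'a) \<noteq> 0" "\<gamma> ^ 4 + 4 * c = 0"
  shows "[:- c, 0, 0, 0, 1:] = [:\<gamma>^2 / 2, \<gamma>, 1:] * [:\<gamma>^2 / 2, - \<gamma>, 1:]"
proof -
  have "\<gamma> * (\<gamma> * (\<gamma> * \<gamma>)) = - (c * 4)"
    using assms(2) by (simp add: power4_eq_xxxx eq_neg_iff_add_eq_0 algebra_simps)
  moreover have "(4::'a) \<noteq> 0"
    using assms(1) mult_eq_0_iff[of "2::'a" 2] by simp
  ultimately show ?thesis
    using assms(1) by (simp add: field_simps power2_eq_square)
qed

section \<open>Reduction modulo \<open>u\<close>\<close>

definition reduce_poly :: "'a::comm_ring_1 dual poly \<Rightarrow> 'a poly" where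
  "reduce_poly p = map_poly dfst p"

lemma dfst_0 [simp]: "dfst 0 = 0" by (simp add: zero_dual_def)
lemma dfst_1 [simp]: "dfst 1 = 1" by (simp add: one_dual_def)
lemma dfst_add [simp]: "dfst (x + y) = dfst x + dfst y" by (simp add: plus_dual_def)
lemma dfst_diff [simp]: "dfst (x - y) = dfst x - dfst y" by (simp add: minus_dual_def)
lemma dfst_mult [simp]: "dfst (x * y) = dfst x * dfst y" by (simp add: times_dual_def)

lemma dfst_sum: "dfst (sum f A) = (\<Sum>i\<in>A. dfst (f i))"
  by (induction A rule: infinite_finite_induct) auto

lemma Dual_sum: "(\<Sum>i\<in>A. Dual (f i) 0) = Dual (sum f A) 0"
  by (induction A rule: infinite_finite_induct) (auto simp: zero_dual_def plus_dual_def)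

lemma coeff_reduce_poly [simp]: "coeff (reduce_poly p) n = dfst (coeff p n)"
  by (simp add: reduce_poly_def coeff_map_poly)

lemma reduce_poly_diff [simp]: "reduce_poly (p - q) = reduce_poly p - reduce_poly q"
  by (rule poly_eqI) simp

lemma reduce_poly_mult [simp]: "reduce_poly (p * q) = reduce_poly p * reduce_poly q"
  by (rule poly_eqI) (simp add: coeff_mult dfst_sum)

lemma reduce_poly_1 [simp]: "reduce_poly 1 = 1"
  by (simp add: reduce_poly_def)

lemma reduce_poly_dvd: "p dvd q \<Longrightarrow> reduce_poly p dvd reduce_poly q"
  by (metis reduce_poly_mult dvd_def)

lemma coeff_lift_poly [simp]: "coeff (lift_poly p) n = Dual (coeff p n) 0"
  by (simp add: lift_poly_def coeff_map_poly zero_dual_def)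

lemma reduce_lift_poly [simp]: "reduce_poly (lift_poly p) = p"
  by (rule poly_eqI) simp

lemma lift_poly_add [simp]: "lift_poly (p + q) = lift_poly p + lift_poly q"
  by (rule poly_eqI) (simp add: plus_dual_def)

lemma lift_poly_diff [simp]: "lift_poly (p - q) = lift_poly p - lift_poly q"
  by (rule poly_eqI) (simp add: minus_dual_def)

lemma lift_poly_mult [simp]: "lift_poly (p * q) = lift_poly p * lift_poly q"
  by (rule poly_eqI) (simp add: coeff_mult times_dual_def Dual_sum)

lemma lift_poly_1 [simp]: "lift_poly 1 = 1"
  by (simp add: lift_poly_def one_dual_def)

lemma lift_poly_power [simp]: "lift_poly (p ^ n) = lift_poly p ^ n"
  by (induction n) auto

lemma lift_poly_monom [simp]: "lift_poly (monom c n) = monom (Dual c 0) n"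
  by (rule poly_eqI) (simp add: coeff_monom zero_dual_def)

lemma lift_poly_const [simp]: "lift_poly [:c:] = [:Dual c 0:]"
  by (rule poly_eqI) (simp add: coeff_pCons zero_dual_def split: nat.split)

lemma reduce_poly_rmod: "reduce_poly (rmod N \<alpha> \<beta>) = monom 1 N - [:\<alpha>:]"
  by (rule poly_eqI) (simp add: rmod_def coeff_monom coeff_pCons split: nat.split)

lemma rmod_dvd_lift_poly_square: "rmod N \<alpha> \<beta> dvd lift_poly (monom 1 N - [:\<alpha>:]) ^ 2"
proof -
  define E where "E = [:Dual 0 \<beta>:]"
  have "[:Dual \<alpha> \<beta>:] = [:Dual \<alpha> 0:] + E"
    by (simp add: E_def plus_dual_def)
  then have M: "rmod N \<alpha> \<beta> = lift_poly (monom 1 N - [:\<alpha>:]) - E"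
    by (simp add: rmod_def one_dual_def)
  have "E * E = 0"
    by (simp add: E_def times_dual_def zero_dual_def)
  then have "lift_poly (monom 1 N - [:\<alpha>:]) ^ 2 = rmod N \<alpha> \<beta> * (rmod N \<alpha> \<beta> + 2 * E)"
    by (simp add: M power2_eq_square algebra_simps)
  then show ?thesis
    by simp
qed

section \<open>Units and principal ideals of \<open>R[x]/\<langle>M\<rangle>\<close>\<close>

lemma lift_poly_dvd: "p dvd q \<Longrightarrow> lift_poly p dvd lift_poly q"
  by (elim dvdE) simp

lemma quot_ideal_mono:
  assumes "g dvd f"
  shows "quot_ideal M f \<subseteq> quot_ideal M g"
proof
  fix P
  assume "P \<in> quot_ideal M f"
  then obtain Q where "M dvd P - Q * f"
    unfolding quot_ideal_def by blast
  moreover obtain h where "f = g * h"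
    using assms ..
  ultimately have "M dvd P - (Q * h) * g"
    by (simp add: ac_simps)
  then show "P \<in> quot_ideal M g"
    unfolding quot_ideal_def by blast
qed

lemma generator_in_quot_ideal: "g \<in> quot_ideal M g"
  unfolding quot_ideal_def by (auto intro: exI[of _ 1])

lemma lift_poly_in_quot_ideal_iff:
  assumes "g dvd reduce_poly M"
  shows "lift_poly P \<in> quot_ideal M (lift_poly g) \<longleftrightarrow> g dvd P"
proof
  assume "lift_poly P \<in> quot_ideal M (lift_poly g)"
  then obtain Q where "M dvd lift_poly P - Q * lift_poly g"
    unfolding quot_ideal_def by auto
  then have "reduce_poly M dvd reduce_poly (lift_poly P - Q * lift_poly g)"
    by (rule reduce_poly_dvd)
  then have "reduce_poly M dvd P - reduce_poly Q * g"
    by simp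
  then have "g dvd P - reduce_poly Q * g"
    using assms dvd_trans by blast
  then show "g dvd P"
    by (metis diff_add_cancel dvd_add dvd_triv_right)
next
  assume "g dvd P"
  then obtain h where "P = g * h" ..
  then show "lift_poly P \<in> quot_ideal M (lift_poly g)"
    unfolding quot_ideal_def by (auto intro: exI[of _ "lift_poly h"] simp: mult.commute)
qed

lemma quot_ideal_lift_poly_psubset:
  fixes f g h :: "'a::field poly"
  assumes "f = g * h" "f \<noteq> 0" "0 < degree h" "f dvd reduce_poly M"
  shows "quot_ideal M (lift_poly f) \<subset> quot_ideal M (lift_poly g)"
proof
  show "quot_ideal M (lift_poly f) \<subseteq> quot_ideal M (lift_poly g)"
    using assms(1) by (intro quot_ideal_mono lift_poly_dvd) simp
  have "\<not> f dvd g"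
  proof
    assume "f dvd g"
    moreover have "g \<noteq> 0" "h \<noteq> 0"
      using assms(1,2) by auto
    ultimately show False
      using dvd_imp_degree_le[of f g] assms(1,3) by (simp add: degree_mult_eq)
  qed
  then show "quot_ideal M (lift_poly f) \<noteq> quot_ideal M (lift_poly g)"
    using generator_in_quot_ideal[of "lift_poly g" M] lift_poly_in_quot_ideal_iff[OF assms(4)]
    by blast
qed

text \<open>A unit lying in the ideal of \<open>G\<close> would make \<open>G\<close> invertible modulo \<open>M\<close>, hence
  \<open>reduce_poly G\<close> invertible modulo its multiple \<open>reduce_poly M\<close>.\<close>
lemma not_quot_unit_if_in_quot_ideal:
  assumes "X \<in> quot_ideal M G" "reduce_poly G dvd reduce_poly M" "\<not> is_unit (reduce_poly G)"
  shows "\<not> quot_unit M X"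
proof
  assume "quot_unit M X"
  then obtain R where R: "M dvd X * R - 1"
    unfolding quot_unit_def by auto
  obtain Q where Q: "M dvd X - Q * G"
    using assms(1) unfolding quot_ideal_def by auto
  have "M dvd (X * R - 1) - (X - Q * G) * R"
    using R Q by (simp add: dvd_diff)
  also have "(X * R - 1) - (X - Q * G) * R = G * (Q * R) - 1"
    by (simp add: algebra_simps)
  finally have "M dvd G * (Q * R) - 1" .
  then have "reduce_poly M dvd reduce_poly (G * (Q * R) - 1)"
    by (rule reduce_poly_dvd)
  then have "reduce_poly G dvd reduce_poly G * reduce_poly (Q * R) - 1"
    using assms(2) dvd_trans by auto
  then have "reduce_poly G dvd reduce_poly G * reduce_poly (Q * R)
      - (reduce_poly G * reduce_poly (Q * R) - 1)"
    by (rule dvd_diff[OF dvd_triv_left])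
  then have "is_unit (reduce_poly G)"
    by simp
  with assms(3) show False ..
qed

text \<open>The inverse of \<open>1 - e\<close> with \<open>e\<^sup>n \<equiv> 0\<close> is the truncated geometric series \<open>\<Sum>i<n. e\<^sup>i\<close>.\<close>
lemma quot_unit_lift_poly_if_bezout:
  assumes "A * P + B * f = 1" "M dvd lift_poly f ^ n"
  shows "quot_unit M (lift_poly P)"
proof -
  define e where "e = lift_poly B * lift_poly f"
  have inv: "lift_poly P * lift_poly A = 1 - e"
    using arg_cong[OF assms(1), of lift_poly] by (simp add: e_def algebra_simps)
  have "lift_poly P * (lift_poly A * (\<Sum>i<n. e ^ i)) - 1 = (1 - e) * (\<Sum>i<n. e ^ i) - 1"
    by (simp add: mult.assoc flip: inv)
  also have "\<dots> = - (e ^ n)"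
    by (simp flip: one_diff_power_eq)
  also have "\<dots> = - (lift_poly B ^ n * lift_poly f ^ n)"
    by (simp add: e_def power_mult_distrib)
  finally have "M dvd lift_poly P * (lift_poly A * (\<Sum>i<n. e ^ i)) - 1"
    using assms(2) by simp
  then show ?thesis
    unfolding quot_unit_def by blast
qed

lemma quot_unit_lift_poly_iff_coprime:
  fixes P f :: "'a::field poly"
  assumes "f dvd reduce_poly M" "M dvd lift_poly f ^ n"
  shows "quot_unit M (lift_poly P) \<longleftrightarrow> coprime P f"
proof
  assume unit: "quot_unit M (lift_poly P)"
  show "coprime P f"
  proof (rule coprimeI)
    fix h
    assume "h dvd P" "h dvd f"
    then have "lift_poly P \<in> quot_ideal M (lift_poly h)" "h dvd reduce_poly M"
      using lift_poly_in_quot_ideal_iff assms(1) dvd_trans by blast+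
    then show "is_unit h"
      using not_quot_unit_if_in_quot_ideal unit by fastforce
  qed
next
  assume "coprime P f"
  then show "quot_unit M (lift_poly P)"
    unfolding coprime_iff_bezout using quot_unit_lift_poly_if_bezout assms(2) by blast
qed

lemma quot_unit_lift_poly_iff_not_in_quot_ideals:
  fixes f g1 g2 P :: "'a::field poly"
  assumes "f = g1 * g2" "degree g1 = 2" "degree g2 = 2" "\<And>r. poly f r \<noteq> 0"
    and "f dvd reduce_poly M" "M dvd lift_poly f ^ n"
  shows "quot_unit M (lift_poly P) \<longleftrightarrow>
    lift_poly P \<notin> quot_ideal M (lift_poly g1) \<union> quot_ideal M (lift_poly g2)"
proof -
  have coprime_iff: "coprime P g \<longleftrightarrow> lift_poly P \<notin> quot_ideal M (lift_poly g)"
    if "g dvd f" "degree g = 2" for g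
  proof -
    have "poly g r \<noteq> 0" for r
      using assms(4)[of r] that(1) by (auto elim!: dvdE)
    moreover have "g dvd reduce_poly M"
      using that(1) assms(5) by (rule dvd_trans)
    ultimately show ?thesis
      using coprime_iff_not_dvd_if_no_root[of g P] lift_poly_in_quot_ideal_iff[of g M P] that(2)
      by simp
  qed
  have "quot_unit M (lift_poly P) \<longleftrightarrow> coprime P g1 \<and> coprime P g2"
    using quot_unit_lift_poly_iff_coprime[OF assms(5,6)] assms(1)
    by (simp add: euclidean_coprime_mult_right_iff)
  then show ?thesis
    using coprime_iff assms(1-3) by simp
qed

theorem proposition3p2:
  fixes p m s :: nat and \<alpha> \<beta> \<alpha>0 \<gamma> a b c d :: "'a::{field,finite}"
  assumes "prime p" and "odd p" and "m > 0" and "s > 0"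
    and "CARD('a) = p ^ m" and "p ^ m mod 4 = 3"
    and "\<alpha> \<noteq> 0" and "\<not> (\<exists>y. y ^ 2 = \<alpha>)"
    and "\<alpha>0 ^ (p ^ s) = \<alpha>" and "\<gamma> ^ 4 + 4 * \<alpha>0 = 0"
    and "\<beta> \<noteq> 0"
    and "[:d, c, b, a:] \<noteq> 0"
  shows "(quot_unit (rmod (4 * p ^ s) \<alpha> \<beta>) (lift_poly [:d, c, b, a:]) \<longleftrightarrow>
            lift_poly [:d, c, b, a:] \<notin>
              quot_ideal (rmod (4 * p ^ s) \<alpha> \<beta>) (lift_poly [:\<gamma>^2 / 2, \<gamma>, 1:]) \<union>
              quot_ideal (rmod (4 * p ^ s) \<alpha> \<beta>) (lift_poly [:\<gamma>^2 / 2, - \<gamma>, 1:]))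
       \<and> quot_ideal (rmod (4 * p ^ s) \<alpha> \<beta>) (lift_poly [:- \<alpha>0, 0, 0, 0, 1:]) \<subset>
           quot_ideal (rmod (4 * p ^ s) \<alpha> \<beta>) (lift_poly [:\<gamma>^2 / 2, \<gamma>, 1:])
       \<and> quot_ideal (rmod (4 * p ^ s) \<alpha> \<beta>) (lift_poly [:- \<alpha>0, 0, 0, 0, 1:]) \<subset>
           quot_ideal (rmod (4 * p ^ s) \<alpha> \<beta>) (lift_poly [:\<gamma>^2 / 2, - \<gamma>, 1:])"
proof -
  define M where "M = rmod (4 * p ^ s) \<alpha> \<beta>"
  define f where "f = [:- \<alpha>0, 0, 0, 0, 1:]"
  define g1 where "g1 = [:\<gamma>^2 / 2, \<gamma>, 1:]"
  define g2 where "g2 = [:\<gamma>^2 / 2, - \<gamma>, 1:]"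
  define P where "P = [:d, c, b, a:]"
  have char: "CHAR('a) = p"
    using CHAR_eq_if_card_eq_prime_power assms(1,5) .
  then have "(2::'a) \<noteq> 0"
    using assms(1,2) of_nat_eq_0_iff_char_dvd[of 2] primes_dvd_imp_eq[OF assms(1) two_is_prime_nat]
    by auto
  then have fg: "f = g1 * g2"
    unfolding f_def g1_def g2_def using x4_minus_const_factorization assms(10) by blast
  have frobenius: "f ^ p ^ s = monom 1 (4 * p ^ s) - [:\<alpha>:]"
    using monom_minus_const_power_CHAR[of 4 \<alpha>0 s] assms(1,2,9) char
    by (simp add: f_def numeral_eq_Suc monom_Suc monom_0)
  then have f_dvd_M: "f dvd reduce_poly M"
    unfolding M_def reduce_poly_rmod frobenius[symmetric]
    using assms(1) by (simp add: dvd_power prime_gt_0_nat)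
  have M_dvd: "M dvd lift_poly f ^ (2 * p ^ s)"
    using rmod_dvd_lift_poly_square[of "4 * p ^ s" \<alpha> \<beta>, folded frobenius]
    by (simp add: M_def mult.commute[of 2] power_mult)
  have no_root: "poly f r \<noteq> 0" for r
    using poly_x4_minus_const_nonzero[of \<alpha>0 "p ^ s"] assms(8,9) by (simp add: f_def)
  have "degree g1 = 2" "degree g2 = 2" "f \<noteq> 0"
    by (simp_all add: g1_def g2_def f_def)
  then have "quot_unit M (lift_poly P) \<longleftrightarrow>
      lift_poly P \<notin> quot_ideal M (lift_poly g1) \<union> quot_ideal M (lift_poly g2)"
    and "quot_ideal M (lift_poly f) \<subset> quot_ideal M (lift_poly g1)"
    and "quot_ideal M (lift_poly f) \<subset> quot_ideal M (lift_poly g2)"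
    using quot_unit_lift_poly_iff_not_in_quot_ideals[OF fg _ _ no_root f_dvd_M M_dvd]
      quot_ideal_lift_poly_psubset[OF fg _ _ f_dvd_M]
      quot_ideal_lift_poly_psubset[OF fg[unfolded mult.commute[of g1]] _ _ f_dvd_M]
    by simp_all
  then show ?thesis
    unfolding M_def P_def f_def g1_def g2_def by blast
qed

end
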